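(* Let $X=A_1\oplus\cdots\oplus A_c=(V,E)$ be an additive product graph, let $p\ge 1$, and let $(\boldsymbol{\gamma},\boldsymbol{\beta})$ be any depth-$p$ ma-QAOA parameters with one angle $\gamma_{j,C}$ per layer $j\in[p]$ and edge category $C\in[c]$ and one angle $\beta_j$ per layer. Fix $C\in[c]$ and an edge $\{u,v\}$ of $\underline{A}_C$. Then the value $\langle\boldsymbol{\gamma},\boldsymbol{\beta}|Z_xZ_y|\boldsymbol{\gamma},\boldsymbol{\beta}\rangle$ is the same for every edge $\{x,y\}$ of $X$ of type $(C,\{u,v\})$, i.e. for all edges of the forms $\{v_1,v_1Cv\}$ (when $u=v_1$), $\{sCu,sCv\}$ (for any admissible string $s$), and $\{sC'w\,,\,sC'wCv\}$-type edges $\{s C' u, sC'uCv\}$ (for any admissible string $s$ and any $C'\neq C$). Consequently each edge $\{u,v\}$ of each $\underline{A}_C$ determines a single value, denoted $-\mathbb{E}[\underline{A}_C(u,v)]$ (so that $\mathbb{E}[\underline{A}_C(u,v)]=-\langle Z_xZ_y\rangle$ for any edge $\{x,y\}$ of type $(C,\{u,v\})$), and all such edges have isomorphic radius-$p$ neighborhoods in $X$ (isomorphic as category-labelled graphs).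
   Context: Additive product graph. Let $n,c\ge1$ and let $A_1,\dots,A_c$ be graphs ("plain atoms") on the common vertex set $[n]=\{1,\dots,n\}$. Let $\underline{A}_j$ denote $A_j$ with its isolated vertices removed; assume each $\underline{A}_j$ is nonempty and connected and that the union graph $([n],E(A_1)\cup\cdots\cup E(A_c))$ is connected. Fix $v_1\in[n]$. The additive product graph $X=A_1\oplus\cdots\oplus A_c=(V,E)$ has as vertex set $V$ the set of strings $v_1C_1v_2C_2\cdots v_kC_kv_{k+1}$ ($k\ge0$) with each $v_i\in[n]$, each $C_i\in[c]$, $C_i\neq C_{i+1}$ for $i<k$, and $v_i,v_{i+1}$ both vertices of $\underline{A}_{C_i}$ for all $i\le k$. Its edge set $E$ consists of (all strings involved being required to lie in $V$, $s$ denoting a prefix string): (i) $\{sCu,sCv\}$ whenever $\{u,v\}$ is an edge of $\underline{A}_C$; (ii) $\{sC'u,\,sC'uCv\}$ whenever $\{u,v\}$ is an edge of $\underline{A}_{C}$ (with $C\ne C'$); (iii) $\{v_1,v_1Cv\}$ whenever $\{v_1,v\}$ is an edge of $\underline{A}_C$. An edge of $X$ produced in (i), (ii) or (iii) from the edge $\{u,v\}$ of $\underline{A}_C$ (with $u=v_1$ in (iii)) is said to be of type $(C,\{u,v\})$ and of category $C$. ma-QAOA on $X$. Parameters: $\gamma_{j,C}\in[0,2\pi]$ for $j\in[p]$, $C\in[c]$, and $\beta_j\in[0,2\pi]$ for $j\in[p]$. For a finite graph $H$ whose edges carry categories $c(e)\in[c]$, the ma-QAOA state is $|\boldsymbol{\gamma},\boldsymbol{\beta}\rangle=e^{-i\beta_pB}e^{-iC_{p}}\cdots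 e^{-i\beta_1B}e^{-iC_{1}}|+\rangle^{\otimes V(H)}$, where $B=\sum_{v}X_v$ and $C_j=-\sum_{\{u,v\}\in E(H)}\gamma_{j,c(\{u,v\})}Z_uZ_v$ ($X_v,Z_v$ Pauli operators on qubit $v$). For an edge $\{x,y\}$ of the infinite graph $X$, $\langle\boldsymbol{\gamma},\boldsymbol{\beta}|Z_xZ_y|\boldsymbol{\gamma},\boldsymbol{\beta}\rangle$ is defined as this expectation computed on the finite subgraph of $X$ induced by the vertices at graph distance at most $p$ from $\{x,y\}$ (with inherited categories). Standard QAOA is the special case $\gamma_{j,1}=\cdots=\gamma_{j,c}$ for all $j$. *)

theory Defs
  imports Complex_Main
begin

definition edge_rel :: "nat set set \<Rightarrow> (nat \<times> nat) set" where
  "edge_rel E = {(a, b). {a, b} \<in> E}"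

text \<open>A j is the edge set of the plain atom A_j on [n] = {1..n}; its underlying graph
  (isolated vertices removed) has vertex set the union of the edges of A j.\<close>
definition atoms_ok :: "nat \<Rightarrow> nat \<Rightarrow> (nat \<Rightarrow> nat set set) \<Rightarrow> bool" where
  "atoms_ok n c A \<longleftrightarrow> n \<ge> 1 \<and> c \<ge> 1 \<and>
     (\<forall>j\<in>{1..c}.
        A j \<subseteq> {e. \<exists>a b. e = {a, b} \<and> a \<noteq> b \<and> a \<in> {1..n} \<and> b \<in> {1..n}} \<and>
        A j \<noteq> {} \<and>
        (\<forall>a\<in>\<Union>(A j). \<forall>b\<in>\<Union>(A j). (a, b) \<in> (edge_rel (A j))\<^sup>*)) \<and>
     (\<forall>a\<in>{1..n}. \<forall>b\<in>{1..n}. (a, b) \<in> (edge_rel (\<Union>j\<in>{1..c}. A j))\<^sup>*)"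

text \<open>A vertex v_1 C_1 v_2 ... C_k v_(k+1) (with v_1 = r the fixed root) is represented by the
  list [(C_1,v_2), ..., (C_k,v_(k+1))].  The empty list is the root string v_1.\<close>
fun valid_from :: "(nat \<Rightarrow> nat set set) \<Rightarrow> nat \<Rightarrow> nat \<Rightarrow> nat option \<Rightarrow> (nat \<times> nat) list \<Rightarrow> bool" where
  "valid_from A c v prevC [] = True"
| "valid_from A c v prevC ((C, w) # ps) =
     (C \<in> {1..c} \<and> prevC \<noteq> Some C \<and> v \<in> \<Union>(A C) \<and> w \<in> \<Union>(A C) \<and> v \<noteq> w \<and>
      valid_from A c w (Some C) ps)"

definition apg_vert :: "(nat \<Rightarrow> nat set set) \<Rightarrow> nat \<Rightarrow> nat \<Rightarrow> (nat \<times> nat) list \<Rightarrow> bool" where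
  "apg_vert A c r s = valid_from A c r None s"

text \<open>Edges of X together with their category C and their type edge {u,v} of A_C.\<close>
definition apg_typed_edges ::
  "(nat \<Rightarrow> nat set set) \<Rightarrow> nat \<Rightarrow> nat \<Rightarrow> ((nat \<times> nat) list set \<times> nat \<times> nat set) set" where
  "apg_typed_edges A c r =
     {({s @ [(C, u)], s @ [(C, v)]}, C, {u, v}) | s C u v.
        {u, v} \<in> A C \<and> apg_vert A c r (s @ [(C, u)]) \<and> apg_vert A c r (s @ [(C, v)])}
   \<union> {({s @ [(C', u)], s @ [(C', u), (C, v)]}, C, {u, v}) | s C C' u v.
        {u, v} \<in> A C \<and> C \<noteq> C' \<and> apg_vert A c r (s @ [(C', u)]) \<and>
        apg_vert A c r (s @ [(C', u), (C, v)])}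
   \<union> {({[], [(C, v)]}, C, {r, v}) | C v. {r, v} \<in> A C \<and> apg_vert A c r [(C, v)]}"

definition apg_cat_edges :: "(nat \<Rightarrow> nat set set) \<Rightarrow> nat \<Rightarrow> nat \<Rightarrow> ((nat \<times> nat) list set \<times> nat) set" where
  "apg_cat_edges A c r = {(e, C). \<exists>t. (e, C, t) \<in> apg_typed_edges A c r}"

definition apg_adj :: "(nat \<Rightarrow> nat set set) \<Rightarrow> nat \<Rightarrow> nat \<Rightarrow> ((nat \<times> nat) list \<times> (nat \<times> nat) list) set" where
  "apg_adj A c r = {(x, y). \<exists>C. ({x, y}, C) \<in> apg_cat_edges A c r}"

definition apg_ball :: "(nat \<Rightarrow> nat set set) \<Rightarrow> nat \<Rightarrow> nat \<Rightarrow> nat \<Rightarrow> (nat \<times> nat) list \<Rightarrow> (nat \<times> nat) list \<Rightarrow> (nat \<times> nat) list set" where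
  "apg_ball A c r p x y = {w. \<exists>k\<le>p. (x, w) \<in> (apg_adj A c r) ^^ k \<or> (y, w) \<in> (apg_adj A c r) ^^ k}"

definition apg_induced :: "(nat \<Rightarrow> nat set set) \<Rightarrow> nat \<Rightarrow> nat \<Rightarrow> (nat \<times> nat) list set \<Rightarrow> ((nat \<times> nat) list set \<times> nat) set" where
  "apg_induced A c r W = {(e, C) \<in> apg_cat_edges A c r. e \<subseteq> W}"

text \<open>Computational basis states of the qubits in W are subsets S of W (S = qubits in state 1);
  a state vector is a function from subsets of W to complex amplitudes.\<close>
definition spin :: "'v set \<Rightarrow> 'v \<Rightarrow> real" where
  "spin S v = (if v \<in> S then -1 else 1)"

text \<open>exp(-i C_j) with C_j = - sum over edges of gamma_(j,c(e)) Z_u Z_v (diagonal).\<close>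
definition phase_sep :: "('v set \<times> nat) set \<Rightarrow> (nat \<Rightarrow> real) \<Rightarrow> ('v set \<Rightarrow> complex) \<Rightarrow> ('v set \<Rightarrow> complex)" where
  "phase_sep Ed g \<psi> = (\<lambda>S. cis (\<Sum>(e, C)\<in>Ed. g C * (\<Prod>v\<in>e. spin S v)) * \<psi> S)"

text \<open>exp(-i b B), B = sum of X_v: tensor product of cos b I - i sin b X.\<close>
definition mixer :: "'v set \<Rightarrow> real \<Rightarrow> ('v set \<Rightarrow> complex) \<Rightarrow> ('v set \<Rightarrow> complex)" where
  "mixer W b \<psi> = (\<lambda>S. \<Sum>T\<in>Pow W.
      (\<Prod>v\<in>W. if (v \<in> S) = (v \<in> T) then complex_of_real (cos b) else - \<i> * complex_of_real (sin b)) * \<psi> T)"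

fun qaoa_state :: "'v set \<Rightarrow> ('v set \<times> nat) set \<Rightarrow> nat \<Rightarrow> (nat \<Rightarrow> nat \<Rightarrow> real) \<Rightarrow> (nat \<Rightarrow> real) \<Rightarrow> ('v set \<Rightarrow> complex)" where
  "qaoa_state W Ed 0 g b = (\<lambda>S. complex_of_real (1 / sqrt 2 ^ card W))"
| "qaoa_state W Ed (Suc j) g b = mixer W (b (Suc j)) (phase_sep Ed (g (Suc j)) (qaoa_state W Ed j g b))"

definition zz_exp :: "'v set \<Rightarrow> ('v set \<times> nat) set \<Rightarrow> nat \<Rightarrow> (nat \<Rightarrow> nat \<Rightarrow> real) \<Rightarrow> (nat \<Rightarrow> real) \<Rightarrow> 'v \<Rightarrow> 'v \<Rightarrow> real" where
  "zz_exp W Ed p g b x y = (\<Sum>S\<in>Pow W. (cmod (qaoa_state W Ed p g b S))\<^sup>2 * spin S x * spin S y)"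

definition apg_zz :: "(nat \<Rightarrow> nat set set) \<Rightarrow> nat \<Rightarrow> nat \<Rightarrow> nat \<Rightarrow> (nat \<Rightarrow> nat \<Rightarrow> real) \<Rightarrow> (nat \<Rightarrow> real) \<Rightarrow> (nat \<times> nat) list \<Rightarrow> (nat \<times> nat) list \<Rightarrow> real" where
  "apg_zz A c r p g b x y =
     (let W = apg_ball A c r p x y in zz_exp W (apg_induced A c r W) p g b x y)"

end

theory Submission
  imports Defs
begin

text \<open>For vertices r and w of a common atom A C, reading the strings of X from w instead of r
  (\<open>reroot\<close>) is an isomorphism of category-labelled graphs between X rooted at r and X
  rooted at w. Composing such isomorphisms along the prefix of an edge of type (C, {u, v})
  moves it to the edge {u, u C v} of X rooted at u, so any two edges of the same type are
  exchanged by an automorphism of X. An automorphism maps radius-p balls with their labelled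
  induced subgraphs onto each other, and the ma-QAOA expectation is invariant under relabelling
  the qubits along such an isomorphism.\<close>

definition relabel_edges :: "('v \<Rightarrow> 'w) \<Rightarrow> ('v set \<times> nat) set \<Rightarrow> ('w set \<times> nat) set" where
  "relabel_edges f Ed = (\<lambda>(e, D). (f ` e, D)) ` Ed"

lemma spin_image:
  assumes "inj_on f W" "T \<subseteq> W" "v \<in> W"
  shows "spin (f ` T) (f v) = spin T v"
  using inj_on_image_mem_iff[OF assms(1,3,2)] unfolding spin_def by simp

lemma phase_sep_relabel:
  assumes inj: "inj_on f W" and EdW: "\<forall>(e, D)\<in>Ed. e \<subseteq> W" and S: "S \<subseteq> W"
    and \<psi>: "\<psi>' (f ` S) = \<psi> S"
  shows "phase_sep (relabel_edges f Ed) h \<psi>' (f ` S) = phase_sep Ed h \<psi> S"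
proof -
  have inj_relabel: "inj_on (\<lambda>(e, D). (f ` e, D)) Ed"
  proof (rule inj_onI)
    fix p1 p2 assume p: "p1 \<in> Ed" "p2 \<in> Ed"
      and eq: "(\<lambda>(e, D). (f ` e, D)) p1 = (\<lambda>(e, D). (f ` e, D)) p2"
    obtain e1 D1 e2 D2 where p12: "p1 = (e1, D1)" "p2 = (e2, D2)" by fastforce
    have "e1 \<in> Pow W" "e2 \<in> Pow W" using p p12 EdW by auto
    then have "e1 = e2" using eq p12 inj_onD[OF inj_on_image_Pow[OF inj]] by simp
    then show "p1 = p2" using eq p12 by simp
  qed
  have "(\<Sum>(e, D)\<in>relabel_edges f Ed. h D * (\<Prod>v\<in>e. spin (f ` S) v))
      = (\<Sum>(e, D)\<in>Ed. h D * (\<Prod>v\<in>f ` e. spin (f ` S) v))"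
    unfolding relabel_edges_def sum.reindex[OF inj_relabel] by (simp add: comp_def case_prod_beta)
  also have "\<dots> = (\<Sum>(e, D)\<in>Ed. h D * (\<Prod>v\<in>e. spin S v))"
  proof (rule sum.cong[OF refl], clarify)
    fix e D assume "(e, D) \<in> Ed"
    then have eW: "e \<subseteq> W" using EdW by auto
    then have "(\<Prod>v\<in>f ` e. spin (f ` S) v) = (\<Prod>v\<in>e. spin (f ` S) (f v))"
      using prod.reindex[OF inj_on_subset[OF inj eW]] by simp
    also have "\<dots> = (\<Prod>v\<in>e. spin S v)"
      using eW spin_image[OF inj S] by (intro prod.cong) auto
    finally show "h D * (\<Prod>v\<in>f ` e. spin (f ` S) v) = h D * (\<Prod>v\<in>e. spin S v)" by simp
  qed
  finally show ?thesis unfolding phase_sep_def using \<psi> by simp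
qed

lemma mixer_relabel:
  assumes bij: "bij_betw f W W'" and S: "S \<subseteq> W"
    and \<psi>: "\<And>T. T \<subseteq> W \<Longrightarrow> \<psi>' (f ` T) = \<psi> T"
  shows "mixer W' b \<psi>' (f ` S) = mixer W b \<psi> S"
proof -
  let ?co = "\<lambda>S T v. if (v \<in> S) = (v \<in> T) then complex_of_real (cos b)
                     else - \<i> * complex_of_real (sin b)"
  have inj: "inj_on f W" using bij_betw_imp_inj_on[OF bij] .
  have co: "(\<Prod>v\<in>W'. ?co (f ` S) (f ` T) v) = (\<Prod>v\<in>W. ?co S T v)" if T: "T \<subseteq> W" for T
  proof -
    have "(\<Prod>v\<in>W'. ?co (f ` S) (f ` T) v) = (\<Prod>v\<in>W. ?co (f ` S) (f ` T) (f v))"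
      using prod.reindex_bij_betw[OF bij, symmetric] by simp
    also have "\<dots> = (\<Prod>v\<in>W. ?co S T v)"
      using inj_on_image_mem_iff[OF inj _ S] inj_on_image_mem_iff[OF inj _ T]
      by (intro prod.cong) auto
    finally show ?thesis .
  qed
  have "mixer W' b \<psi>' (f ` S) = (\<Sum>T\<in>Pow W. (\<Prod>v\<in>W'. ?co (f ` S) (f ` T) v) * \<psi>' (f ` T))"
    unfolding mixer_def using sum.reindex_bij_betw[OF bij_betw_image_Pow[OF bij], symmetric]
    by simp
  also have "\<dots> = mixer W b \<psi> S"
    unfolding mixer_def using co \<psi> by (intro sum.cong) auto
  finally show ?thesis .
qed

lemma qaoa_state_relabel:
  assumes bij: "bij_betw f W W'" and EdW: "\<forall>(e, D)\<in>Ed. e \<subseteq> W" and S: "S \<subseteq> W"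
  shows "qaoa_state W' (relabel_edges f Ed) j g b (f ` S) = qaoa_state W Ed j g b S"
  using S
proof (induction j arbitrary: S)
  case 0
  then show ?case using bij_betw_same_card[OF bij] by simp
next
  case (Suc j)
  have "phase_sep (relabel_edges f Ed) (g (Suc j)) (qaoa_state W' (relabel_edges f Ed) j g b) (f ` T)
      = phase_sep Ed (g (Suc j)) (qaoa_state W Ed j g b) T" if T: "T \<subseteq> W" for T
    using bij_betw_imp_inj_on[OF bij] EdW T Suc.IH[OF T] by (rule phase_sep_relabel)
  then show ?case using mixer_relabel[OF bij Suc.prems] by simp
qed

lemma zz_exp_relabel:
  assumes bij: "bij_betw f W W'" and EdW: "\<forall>(e, D)\<in>Ed. e \<subseteq> W"
    and x: "x \<in> W" and y: "y \<in> W"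
  shows "zz_exp W' (relabel_edges f Ed) p g b (f x) (f y) = zz_exp W Ed p g b x y"
proof -
  have "zz_exp W' (relabel_edges f Ed) p g b (f x) (f y)
      = (\<Sum>S\<in>Pow W. (cmod (qaoa_state W' (relabel_edges f Ed) p g b (f ` S)))\<^sup>2
                        * spin (f ` S) (f x) * spin (f ` S) (f y))"
    unfolding zz_exp_def using sum.reindex_bij_betw[OF bij_betw_image_Pow[OF bij], symmetric]
    by simp
  also have "\<dots> = zz_exp W Ed p g b x y"
    unfolding zz_exp_def
    using qaoa_state_relabel[OF bij EdW] spin_image[OF bij_betw_imp_inj_on[OF bij]] x y
    by (intro sum.cong) auto
  finally show ?thesis .
qed

lemma zz_exp_commute: "zz_exp W Ed p g b x y = zz_exp W Ed p g b y x"
  unfolding zz_exp_def by (simp add: ac_simps)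

lemma valid_from_append:
  "valid_from A c v q (xs @ ys) \<longleftrightarrow> valid_from A c v q xs \<and>
     valid_from A c (if xs = [] then v else snd (last xs))
                    (if xs = [] then q else Some (fst (last xs))) ys"
  by (induction xs arbitrary: v q) auto

lemma valid_from_forget_prev: "valid_from A c v q t \<Longrightarrow> valid_from A c v None t"
  by (cases t) auto

definition end_vertex :: "nat \<Rightarrow> (nat \<times> nat) list \<Rightarrow> nat" where
  "end_vertex r t = (if t = [] then r else snd (last t))"

lemma apg_vert_snocD:
  "apg_vert A c r (s @ [(D, z)]) \<Longrightarrow>
     D \<in> {1..c} \<and> end_vertex r s \<in> \<Union>(A D) \<and> z \<in> \<Union>(A D) \<and> end_vertex r s \<noteq> z \<and> apg_vert A c r s"
  unfolding apg_vert_def end_vertex_def by (auto simp: valid_from_append)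

text \<open>Rule (i) of the edge definition, and rules (ii) and (iii) oriented from the shorter
  string to the longer one.\<close>
definition apg_arc :: "(nat \<Rightarrow> nat set set) \<Rightarrow> nat \<Rightarrow> nat \<Rightarrow> nat \<Rightarrow> (nat \<times> nat) list \<Rightarrow> (nat \<times> nat) list \<Rightarrow> bool" where
  "apg_arc A c r D a b \<longleftrightarrow> apg_vert A c r a \<and> apg_vert A c r b \<and>
     ((\<exists>s z z'. a = s @ [(D, z)] \<and> b = s @ [(D, z')] \<and> {z, z'} \<in> A D) \<or>
      (\<exists>z. b = a @ [(D, z)] \<and> {end_vertex r a, z} \<in> A D))"

lemma apg_cat_edge_doubleton: "(e, D) \<in> apg_cat_edges A c r \<Longrightarrow> \<exists>a b. e = {a, b}"
  unfolding apg_cat_edges_def apg_typed_edges_def by blast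

lemma apg_typed_edge_cat: "(e, C, T) \<in> apg_typed_edges A c r \<Longrightarrow> (e, C) \<in> apg_cat_edges A c r"
  unfolding apg_cat_edges_def by blast

lemma apg_cat_edge_if_arc:
  assumes "apg_arc A c r D a b"
  shows "({a, b}, D) \<in> apg_cat_edges A c r"
proof -
  from assms have va: "apg_vert A c r a" and vb: "apg_vert A c r b" unfolding apg_arc_def by auto
  from assms consider (sibling) s z z' where "a = s @ [(D, z)]" "b = s @ [(D, z')]" "{z, z'} \<in> A D"
    | (child) z where "b = a @ [(D, z)]" "{end_vertex r a, z} \<in> A D"
    unfolding apg_arc_def by blast
  then have "\<exists>T. ({a, b}, D, T) \<in> apg_typed_edges A c r"
  proof cases
    case sibling
    then show ?thesis unfolding apg_typed_edges_def using va vb by blast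
  next
    case child
    show ?thesis
    proof (cases a rule: rev_cases)
      case Nil
      then show ?thesis unfolding apg_typed_edges_def using vb child by (simp add: end_vertex_def) blast
    next
      case (snoc s p)
      obtain C' u where a: "a = s @ [(C', u)]" using snoc by (cases p) simp
      have "C' \<noteq> D" using vb child a unfolding apg_vert_def by (simp add: valid_from_append)
      then show ?thesis
        unfolding apg_typed_edges_def using va vb child a by (simp add: end_vertex_def) blast
    qed
  qed
  then show ?thesis unfolding apg_cat_edges_def by blast
qed

lemma apg_cat_edge_iff_arc:
  "({a, b}, D) \<in> apg_cat_edges A c r \<longleftrightarrow> apg_arc A c r D a b \<or> apg_arc A c r D b a"
proof
  assume "({a, b}, D) \<in> apg_cat_edges A c r"
  then show "apg_arc A c r D a b \<or> apg_arc A c r D b a"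
    unfolding apg_cat_edges_def apg_typed_edges_def apg_arc_def
    by (simp add: doubleton_eq_iff) (elim disjE exE conjE; simp add: apg_vert_def end_vertex_def)
next
  assume "apg_arc A c r D a b \<or> apg_arc A c r D b a"
  then show "({a, b}, D) \<in> apg_cat_edges A c r"
    using apg_cat_edge_if_arc[of A c r D a b] apg_cat_edge_if_arc[of A c r D b a]
    by (auto simp: insert_commute)
qed

lemma apg_cat_edge_verts:
  "({a, b}, D) \<in> apg_cat_edges A c r \<Longrightarrow> apg_vert A c r a \<and> apg_vert A c r b"
  unfolding apg_cat_edge_iff_arc apg_arc_def by blast

text \<open>For r, w in the same atom A C, strings are re-read from the root w: r C w s becomes w s,
  r C z s becomes w C z s for z \<noteq> w, and r D s becomes w C r D s for D \<noteq> C.\<close>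
definition reroot :: "nat \<Rightarrow> nat \<Rightarrow> nat \<Rightarrow> (nat \<times> nat) list \<Rightarrow> (nat \<times> nat) list" where
  "reroot r w C t = (case t of [] \<Rightarrow> [(C, r)] | (D, z) # t' \<Rightarrow>
      if D = C then (if z = w then t' else t) else (C, r) # t)"

lemma reroot_Nil [simp]: "reroot r w C [] = [(C, r)]"
  by (simp add: reroot_def)

lemma reroot_Cons [simp]:
  "reroot r w C ((D, z) # t) =
     (if D = C then (if z = w then t else (D, z) # t) else (C, r) # (D, z) # t)"
  by (simp add: reroot_def)

lemma reroot_append: "t \<noteq> [] \<Longrightarrow> reroot r w C (t @ s) = reroot r w C t @ s"
  by (cases t) (auto simp: reroot_def split: prod.splits)

lemma end_vertex_reroot: "end_vertex w (reroot r w C t) = end_vertex r t"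
  by (cases t) (auto simp: reroot_def end_vertex_def split: prod.splits)

lemma apg_vert_reroot:
  assumes "C \<in> {1..c}" "r \<in> \<Union>(A C)" "w \<in> \<Union>(A C)" "r \<noteq> w" "apg_vert A c r t"
  shows "apg_vert A c w (reroot r w C t)"
  using assms unfolding apg_vert_def
  by (cases t) (auto intro: valid_from_forget_prev)

lemma reroot_reroot:
  assumes "apg_vert A c r t"
  shows "reroot w r C (reroot r w C t) = t"
  using assms unfolding apg_vert_def
  by (cases t rule: remdups_adj.cases) auto

lemma apg_arc_reroot:
  assumes no_loops: "\<forall>D\<in>{1..c}. \<forall>z. {z} \<notin> A D"
    and C: "C \<in> {1..c}" and r: "r \<in> \<Union>(A C)" and w: "w \<in> \<Union>(A C)" and rw: "r \<noteq> w"
    and arc: "apg_arc A c r D a b"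
  shows "apg_arc A c w D (reroot r w C a) (reroot r w C b) \<or>
         apg_arc A c w D (reroot r w C b) (reroot r w C a)"
proof -
  from arc have "apg_vert A c r a" "apg_vert A c r b" unfolding apg_arc_def by auto
  then have va: "apg_vert A c w (reroot r w C a)" and vb: "apg_vert A c w (reroot r w C b)"
    using apg_vert_reroot[of C c r A w, OF C r w rw] by auto
  from arc consider (sibling) s z z' where "a = s @ [(D, z)]" "b = s @ [(D, z')]" "{z, z'} \<in> A D"
    | (child) z where "b = a @ [(D, z)]" "{end_vertex r a, z} \<in> A D"
    unfolding apg_arc_def by blast
  then show ?thesis
  proof cases
    case sibling
    have "D \<in> {1..c}" using apg_vert_snocD \<open>apg_vert A c r a\<close> sibling by blast
    then have "z \<noteq> z'" using no_loops sibling by auto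
    then show ?thesis
      using sibling va vb reroot_append[of s r w C]
      unfolding apg_arc_def by (cases "s = []") (auto simp: end_vertex_def insert_commute)
  next
    case child
    then show ?thesis
      using va vb reroot_append[of a r w C] end_vertex_reroot[of w r C a]
      unfolding apg_arc_def by (cases "a = []") (auto simp: end_vertex_def insert_commute)
  qed
qed

definition apg_iso :: "(nat \<Rightarrow> nat set set) \<Rightarrow> nat \<Rightarrow> nat \<Rightarrow> nat \<Rightarrow> ((nat \<times> nat) list \<Rightarrow> (nat \<times> nat) list) \<Rightarrow> bool" where
  "apg_iso A c r r' f \<longleftrightarrow> bij_betw f {t. apg_vert A c r t} {t. apg_vert A c r' t} \<and>
     (\<forall>a b D. apg_vert A c r a \<longrightarrow> apg_vert A c r b \<longrightarrow>
        (({a, b}, D) \<in> apg_cat_edges A c r \<longleftrightarrow> ({f a, f b}, D) \<in> apg_cat_edges A c r'))"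

lemma apg_iso_id: "apg_iso A c r r id"
  unfolding apg_iso_def by simp

lemma apg_iso_comp:
  assumes f: "apg_iso A c r1 r2 f" and g: "apg_iso A c r2 r3 g"
  shows "apg_iso A c r1 r3 (g \<circ> f)"
proof -
  have bf: "bij_betw f {t. apg_vert A c r1 t} {t. apg_vert A c r2 t}"
    and bg: "bij_betw g {t. apg_vert A c r2 t} {t. apg_vert A c r3 t}"
    using f g by (simp_all add: apg_iso_def)
  have "apg_vert A c r2 (f a)" if "apg_vert A c r1 a" for a
    using bij_betw_apply[OF bf] that by blast
  then show ?thesis using f g bij_betw_trans[OF bf bg] unfolding apg_iso_def by simp
qed

lemma apg_iso_inv:
  assumes f: "apg_iso A c r r' f"
  shows "apg_iso A c r' r (inv_into {t. apg_vert A c r t} f)"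
proof -
  let ?V = "{t. apg_vert A c r t}" and ?g = "inv_into {t. apg_vert A c r t} f"
  have bij: "bij_betw f ?V {t. apg_vert A c r' t}" using f apg_iso_def by blast
  have "({a, b}, D) \<in> apg_cat_edges A c r' \<longleftrightarrow> ({?g a, ?g b}, D) \<in> apg_cat_edges A c r"
    if "apg_vert A c r' a" "apg_vert A c r' b" for a b D
  proof -
    have "apg_vert A c r (?g a)" "apg_vert A c r (?g b)"
      using bij_betw_inv_into[OF bij] that bij_betw_apply by fastforce+
    moreover have "f (?g a) = a" "f (?g b) = b"
      using bij that bij_betw_inv_into_right by fastforce+
    ultimately show ?thesis using f unfolding apg_iso_def by metis
  qed
  then show ?thesis unfolding apg_iso_def using bij_betw_inv_into[OF bij] by blast
qed

lemma apg_iso_reroot: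
  assumes no_loops: "\<forall>D\<in>{1..c}. \<forall>z. {z} \<notin> A D"
    and C: "C \<in> {1..c}" and r: "r \<in> \<Union>(A C)" and w: "w \<in> \<Union>(A C)" and rw: "r \<noteq> w"
  shows "apg_iso A c r w (reroot r w C)"
  unfolding apg_iso_def
proof (intro conjI allI impI)
  show "bij_betw (reroot r w C) {t. apg_vert A c r t} {t. apg_vert A c w t}"
    by (rule bij_betw_byWitness[where f' = "reroot w r C"])
       (auto intro: apg_vert_reroot[of C c r A w, OF C r w rw]
                    apg_vert_reroot[of C c w A r, OF C w r rw[symmetric]] reroot_reroot)
next
  fix a b D assume va: "apg_vert A c r a" and vb: "apg_vert A c r b"
  show "({a, b}, D) \<in> apg_cat_edges A c r \<longleftrightarrow>
        ({reroot r w C a, reroot r w C b}, D) \<in> apg_cat_edges A c w"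
  proof
    assume "({a, b}, D) \<in> apg_cat_edges A c r"
    then show "({reroot r w C a, reroot r w C b}, D) \<in> apg_cat_edges A c w"
      using apg_arc_reroot[OF no_loops C r w rw] unfolding apg_cat_edge_iff_arc by blast
  next
    assume "({reroot r w C a, reroot r w C b}, D) \<in> apg_cat_edges A c w"
    then have "({reroot w r C (reroot r w C a), reroot w r C (reroot r w C b)}, D) \<in> apg_cat_edges A c r"
      using apg_arc_reroot[OF no_loops C w r rw[symmetric]] unfolding apg_cat_edge_iff_arc by blast
    then show "({a, b}, D) \<in> apg_cat_edges A c r" using reroot_reroot va vb by simp
  qed
qed

text \<open>Rerooting letter by letter along a string P gives an isomorphism onto X rooted at the end
  vertex of P which deletes the prefix P.\<close>
lemma apg_iso_strip_prefix:
  assumes no_loops: "\<forall>D\<in>{1..c}. \<forall>z. {z} \<notin> A D"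
  shows "apg_vert A c r P \<Longrightarrow>
    \<exists>f. apg_iso A c r (end_vertex r P) f \<and> (\<forall>t. apg_vert A c r (P @ t) \<longrightarrow> f (P @ t) = t)"
proof (induction P rule: rev_induct)
  case Nil
  show ?case using apg_iso_id[of A c r] by (intro exI[of _ id]) (simp add: end_vertex_def id_def)
next
  case (snoc p Q)
  obtain D w where p: "p = (D, w)" by (cases p)
  have h: "D \<in> {1..c}" "end_vertex r Q \<in> \<Union>(A D)" "w \<in> \<Union>(A D)" "end_vertex r Q \<noteq> w"
    "apg_vert A c r Q"
    using apg_vert_snocD snoc.prems p by blast+
  obtain f where f: "apg_iso A c r (end_vertex r Q) f"
    and strip: "\<forall>t. apg_vert A c r (Q @ t) \<longrightarrow> f (Q @ t) = t"
    using snoc.IH[OF h(5)] by blast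
  have "apg_iso A c r w (reroot (end_vertex r Q) w D \<circ> f)"
    using apg_iso_comp[OF f apg_iso_reroot[OF no_loops h(1-4)]] .
  moreover have "end_vertex r (Q @ [p]) = w" using p by (simp add: end_vertex_def)
  moreover have "(reroot (end_vertex r Q) w D \<circ> f) ((Q @ [p]) @ t) = t"
    if "apg_vert A c r ((Q @ [p]) @ t)" for t
    using strip that p by simp
  ultimately show ?case by metis
qed

definition atom_vertex :: "nat \<Rightarrow> nat \<Rightarrow> nat \<Rightarrow> (nat \<times> nat) list" where
  "atom_vertex C a z = (if z = a then [] else [(C, z)])"

lemma apg_iso_atom_vertex:
  assumes no_loops: "\<forall>D\<in>{1..c}. \<forall>z. {z} \<notin> A D"
    and C: "C \<in> {1..c}" and a: "a \<in> \<Union>(A C)" and b: "b \<in> \<Union>(A C)"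
  shows "\<exists>g. apg_iso A c a b g \<and> (\<forall>z. g (atom_vertex C a z) = atom_vertex C b z)"
proof (cases "a = b")
  case True
  then show ?thesis using apg_iso_id by fastforce
next
  case False
  then have "reroot a b C (atom_vertex C a z) = atom_vertex C b z" for z
    by (auto simp: atom_vertex_def)
  then show ?thesis using apg_iso_reroot[OF no_loops C a b False] by blast
qed

lemma apg_typed_edge_atom_form:
  assumes "({x, y}, C, T) \<in> apg_typed_edges A c r"
  shows "\<exists>P a b. T = {a, b} \<and> apg_vert A c r P \<and> end_vertex r P \<in> \<Union>(A C) \<and> C \<in> {1..c} \<and>
           {x, y} = {P @ atom_vertex C (end_vertex r P) a, P @ atom_vertex C (end_vertex r P) b}"
  using assms unfolding apg_typed_edges_def
proof (elim UnE CollectE exE conjE)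
  fix s C0 u v
  assume e: "({x, y}, C, T) = ({s @ [(C0, u)], s @ [(C0, v)]}, C0, {u, v})"
    and vu: "apg_vert A c r (s @ [(C0, u)])" and vv: "apg_vert A c r (s @ [(C0, v)])"
  then have "C0 = C" by simp
  note U = apg_vert_snocD[OF vu, unfolded \<open>C0 = C\<close>] and V = apg_vert_snocD[OF vv, unfolded \<open>C0 = C\<close>]
  then have "atom_vertex C (end_vertex r s) u = [(C, u)]" "atom_vertex C (end_vertex r s) v = [(C, v)]"
    unfolding atom_vertex_def by simp_all
  then show ?thesis using e U by (intro exI[of _ s] exI[of _ u] exI[of _ v]) simp
next
  fix s C0 C' u v
  assume e: "({x, y}, C, T) = ({s @ [(C', u)], s @ [(C', u), (C0, v)]}, C0, {u, v})"
    and vv: "apg_vert A c r (s @ [(C', u), (C0, v)])"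
  let ?P = "s @ [(C', u)]"
  have P: "end_vertex r ?P = u" by (simp add: end_vertex_def)
  have "apg_vert A c r (?P @ [(C, v)])" using vv e by simp
  note V = apg_vert_snocD[OF this, unfolded P]
  then have "atom_vertex C u u = []" "atom_vertex C u v = [(C, v)]"
    unfolding atom_vertex_def by simp_all
  then show ?thesis using e V P by (intro exI[of _ ?P] exI[of _ u] exI[of _ v]) simp
next
  fix C0 v
  assume e: "({x, y}, C, T) = ({[], [(C0, v)]}, C0, {r, v})"
    and vv: "apg_vert A c r [(C0, v)]"
  have P: "end_vertex r [] = r" by (simp add: end_vertex_def)
  have "apg_vert A c r ([] @ [(C, v)])" using vv e by simp
  note V = apg_vert_snocD[OF this, unfolded P]
  then have "atom_vertex C r r = []" "atom_vertex C r v = [(C, v)]"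
    unfolding atom_vertex_def by simp_all
  then show ?thesis using e V P by (intro exI[of _ "[]"] exI[of _ r] exI[of _ v]) simp
qed

lemma apg_typed_edge_to_root:
  assumes no_loops: "\<forall>D\<in>{1..c}. \<forall>z. {z} \<notin> A D"
    and e: "({x, y}, C, {u, v}) \<in> apg_typed_edges A c r" and uv: "{u, v} \<in> A C"
  shows "\<exists>f. apg_iso A c r u f \<and> f ` {x, y} = {[], [(C, v)]}"
proof -
  obtain P a b where ab: "{u, v} = {a, b}" and P: "apg_vert A c r P"
    and end_P: "end_vertex r P \<in> \<Union>(A C)" and C: "C \<in> {1..c}"
    and xy: "{x, y} = {P @ atom_vertex C (end_vertex r P) a, P @ atom_vertex C (end_vertex r P) b}"
    using apg_typed_edge_atom_form[OF e] by blast
  obtain f where f: "apg_iso A c r (end_vertex r P) f"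
    and strip: "\<forall>t. apg_vert A c r (P @ t) \<longrightarrow> f (P @ t) = t"
    using apg_iso_strip_prefix[OF no_loops P] by blast
  obtain g where g: "apg_iso A c (end_vertex r P) u g"
    and g_atom: "\<forall>z. g (atom_vertex C (end_vertex r P) z) = atom_vertex C u z"
    using apg_iso_atom_vertex[OF no_loops C end_P, of u] uv by blast
  have "apg_vert A c r x" "apg_vert A c r y"
    using apg_cat_edge_verts[OF apg_typed_edge_cat[OF e]] by blast+
  then have "apg_vert A c r (P @ atom_vertex C (end_vertex r P) a)"
    "apg_vert A c r (P @ atom_vertex C (end_vertex r P) b)"
    using xy by (auto simp: doubleton_eq_iff)
  then have "(g \<circ> f) ` {x, y} = {atom_vertex C u a, atom_vertex C u b}"
    unfolding xy using strip g_atom by simp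
  also have "\<dots> = {atom_vertex C u u, atom_vertex C u v}" using ab by (auto simp: doubleton_eq_iff)
  also have "\<dots> = {[], [(C, v)]}" using no_loops C uv by (auto simp: atom_vertex_def)
  finally show ?thesis using apg_iso_comp[OF f g] by blast
qed

lemma apg_adj_verts: "(a, b) \<in> apg_adj A c r \<Longrightarrow> apg_vert A c r a \<and> apg_vert A c r b"
  unfolding apg_adj_def using apg_cat_edge_verts by blast

lemma apg_iso_relpow:
  assumes f: "apg_iso A c r r' f" and x: "apg_vert A c r x"
  shows "(x, w) \<in> apg_adj A c r ^^ k \<Longrightarrow> apg_vert A c r w \<and> (f x, f w) \<in> apg_adj A c r' ^^ k"
proof (induction k arbitrary: w)
  case 0
  then show ?case using x by simp
next
  case (Suc k)
  then obtain m where m: "(x, m) \<in> apg_adj A c r ^^ k" and mw: "(m, w) \<in> apg_adj A c r" by auto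
  have "apg_vert A c r m" "apg_vert A c r w" using apg_adj_verts[OF mw] by auto
  then have "(f m, f w) \<in> apg_adj A c r'"
    using mw f unfolding apg_adj_def apg_iso_def by blast
  then show ?case using Suc.IH[OF m] \<open>apg_vert A c r w\<close> by auto
qed

lemma apg_ball_verts:
  assumes x: "apg_vert A c r x" and y: "apg_vert A c r y"
  shows "apg_ball A c r p x y \<subseteq> {t. apg_vert A c r t}"
proof
  fix w assume "w \<in> apg_ball A c r p x y"
  then obtain k where "(x, w) \<in> apg_adj A c r ^^ k \<or> (y, w) \<in> apg_adj A c r ^^ k"
    unfolding apg_ball_def by blast
  then show "w \<in> {t. apg_vert A c r t}"
    using apg_iso_relpow[OF apg_iso_id x] apg_iso_relpow[OF apg_iso_id y] by blast
qed

lemma apg_ball_commute: "apg_ball A c r p x y = apg_ball A c r p y x"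
  unfolding apg_ball_def by blast

lemma apg_ball_endpoints: "x \<in> apg_ball A c r p x y" "y \<in> apg_ball A c r p x y"
  unfolding apg_ball_def by (intro CollectI exI[of _ 0]; simp)+

lemma apg_iso_image_ball_subset:
  assumes f: "apg_iso A c r r' f" and x: "apg_vert A c r x" and y: "apg_vert A c r y"
  shows "f ` apg_ball A c r p x y \<subseteq> apg_ball A c r' p (f x) (f y)"
  unfolding apg_ball_def using apg_iso_relpow[OF f x] apg_iso_relpow[OF f y] by blast

lemma apg_iso_image_ball:
  assumes f: "apg_iso A c r r' f" and x: "apg_vert A c r x" and y: "apg_vert A c r y"
  shows "f ` apg_ball A c r p x y = apg_ball A c r' p (f x) (f y)"
proof
  show "f ` apg_ball A c r p x y \<subseteq> apg_ball A c r' p (f x) (f y)"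
    using apg_iso_image_ball_subset[OF f x y] .
next
  let ?g = "inv_into {t. apg_vert A c r t} f"
  have bij: "bij_betw f {t. apg_vert A c r t} {t. apg_vert A c r' t}" using f apg_iso_def by blast
  have fxy: "apg_vert A c r' (f x)" "apg_vert A c r' (f y)" using bij x y bij_betw_apply by fastforce+
  have gfxy: "?g (f x) = x" "?g (f y) = y" using bij x y bij_betw_inv_into_left by fastforce+
  have "?g ` apg_ball A c r' p (f x) (f y) \<subseteq> apg_ball A c r p x y"
    using apg_iso_image_ball_subset[OF apg_iso_inv[OF f] fxy] gfxy by simp
  moreover have "f (?g w) = w" if "w \<in> apg_ball A c r' p (f x) (f y)" for w
    using apg_ball_verts[OF fxy] that bij bij_betw_inv_into_right by fastforce
  ultimately show "apg_ball A c r' p (f x) (f y) \<subseteq> f ` apg_ball A c r p x y" by force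
qed

lemma apg_iso_cat_edge_image:
  assumes f: "apg_iso A c r r' f" and e: "e \<subseteq> {t. apg_vert A c r t}"
  shows "(e, D) \<in> apg_cat_edges A c r \<longleftrightarrow> (f ` e, D) \<in> apg_cat_edges A c r'"
proof
  assume "(e, D) \<in> apg_cat_edges A c r"
  moreover obtain a b where "e = {a, b}" using apg_cat_edge_doubleton[OF calculation] by blast
  ultimately show "(f ` e, D) \<in> apg_cat_edges A c r'" using f e unfolding apg_iso_def by simp
next
  assume fe: "(f ` e, D) \<in> apg_cat_edges A c r'"
  obtain a' b' where "f ` e = {a', b'}" using apg_cat_edge_doubleton[OF fe] by blast
  then obtain a b where ab: "a \<in> e" "b \<in> e" "f ` e = {f a, f b}" by (metis imageE insertI1 insertI2)
  have "inj_on f e" using f e unfolding apg_iso_def bij_betw_def by (blast intro: inj_on_subset)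
  then have "e = {a, b}" using ab inj_on_image_eq_iff[of f e e "{a, b}"] by auto
  then show "(e, D) \<in> apg_cat_edges A c r" using f e fe ab unfolding apg_iso_def by auto
qed

lemma apg_iso_neighbourhood:
  fixes p :: nat
  assumes f: "apg_iso A c r r' f" and x: "apg_vert A c r x" and y: "apg_vert A c r y"
  defines "W \<equiv> apg_ball A c r p x y" and "W' \<equiv> apg_ball A c r' p (f x) (f y)"
  shows "bij_betw f W W'"
    and "\<And>e D. e \<subseteq> W \<Longrightarrow> (e, D) \<in> apg_induced A c r W \<longleftrightarrow> (f ` e, D) \<in> apg_induced A c r' W'"
    and "apg_induced A c r' W' = relabel_edges f (apg_induced A c r W)"
proof -
  have WV: "W \<subseteq> {t. apg_vert A c r t}" unfolding W_def using apg_ball_verts[OF x y] .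
  have fW: "f ` W = W'" unfolding W_def W'_def using apg_iso_image_ball[OF f x y] .
  have inj: "inj_on f W" using f WV unfolding apg_iso_def bij_betw_def by (blast intro: inj_on_subset)
  then show "bij_betw f W W'" using fW by (simp add: bij_betw_def)
  show induced: "(e, D) \<in> apg_induced A c r W \<longleftrightarrow> (f ` e, D) \<in> apg_induced A c r' W'"
    if "e \<subseteq> W" for e D
    using that apg_iso_cat_edge_image[OF f, of e D] WV fW unfolding apg_induced_def by auto
  show "apg_induced A c r' W' = relabel_edges f (apg_induced A c r W)"
  proof (intro set_eqI iffI)
    fix z assume z: "z \<in> apg_induced A c r' W'"
    then obtain e' D where z': "z = (e', D)" "e' \<subseteq> f ` W" using fW unfolding apg_induced_def by auto
    then obtain e where "e \<subseteq> W" "e' = f ` e" by (auto simp: subset_image_iff)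
    then show "z \<in> relabel_edges f (apg_induced A c r W)"
      using induced z z' unfolding relabel_edges_def by force
  next
    fix z assume "z \<in> relabel_edges f (apg_induced A c r W)"
    then obtain e D where "z = (f ` e, D)" "(e, D) \<in> apg_induced A c r W"
      unfolding relabel_edges_def by auto
    then show "z \<in> apg_induced A c r' W'" using induced unfolding apg_induced_def by auto
  qed
qed

lemma apg_zz_iso:
  assumes f: "apg_iso A c r r' f" and x: "apg_vert A c r x" and y: "apg_vert A c r y"
  shows "apg_zz A c r' p g b (f x) (f y) = apg_zz A c r p g b x y"
  unfolding apg_zz_def Let_def apg_iso_neighbourhood(3)[OF f x y]
  by (rule zz_exp_relabel[OF apg_iso_neighbourhood(1)[OF f x y]])
     (auto simp: apg_induced_def apg_ball_endpoints)

lemma apg_zz_commute: "apg_zz A c r p g b x y = apg_zz A c r p g b y x"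
  unfolding apg_zz_def Let_def using zz_exp_commute apg_ball_commute by metis

lemma apg_iso_edge_neighbourhood:
  assumes f: "apg_iso A c r r' f" and x: "apg_vert A c r x" and y: "apg_vert A c r y"
    and fxy: "f ` {x, y} = {x', y'}"
  shows "apg_zz A c r p g b x y = apg_zz A c r' p g b x' y'
    \<and> bij_betw f (apg_ball A c r p x y) (apg_ball A c r' p x' y')
    \<and> (\<forall>e D. e \<subseteq> apg_ball A c r p x y \<longrightarrow>
          ((e, D) \<in> apg_induced A c r (apg_ball A c r p x y)
           \<longleftrightarrow> (f ` e, D) \<in> apg_induced A c r' (apg_ball A c r' p x' y')))"
proof -
  have "(f x = x' \<and> f y = y') \<or> (f x = y' \<and> f y = x')" using fxy by (simp add: doubleton_eq_iff)
  then have "apg_ball A c r' p (f x) (f y) = apg_ball A c r' p x' y'"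
    and "apg_zz A c r' p g b (f x) (f y) = apg_zz A c r' p g b x' y'"
    using apg_ball_commute apg_zz_commute by metis+
  then show ?thesis
    using apg_zz_iso[OF f x y] apg_iso_neighbourhood(1,2)[OF f x y, where p = p] by simp
qed

lemma atoms_ok_no_loops: "atoms_ok n c A \<Longrightarrow> \<forall>D\<in>{1..c}. \<forall>z. {z} \<notin> A D"
  unfolding atoms_ok_def by (fastforce simp: doubleton_eq_iff)

theorem mainTheorem1:
  fixes n c r p C u v :: nat and A :: "nat \<Rightarrow> nat set set"
    and \<gamma> :: "nat \<Rightarrow> nat \<Rightarrow> real" and \<beta> :: "nat \<Rightarrow> real"
    and x y x' y' :: "(nat \<times> nat) list"
  assumes "atoms_ok n c A" and "r \<in> {1..n}" and "p \<ge> 1"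
    and "\<forall>j\<in>{1..p}. \<forall>D\<in>{1..c}. 0 \<le> \<gamma> j D \<and> \<gamma> j D \<le> 2 * pi"
    and "\<forall>j\<in>{1..p}. 0 \<le> \<beta> j \<and> \<beta> j \<le> 2 * pi"
    and "C \<in> {1..c}" and "{u, v} \<in> A C"
    and "({x, y}, C, {u, v}) \<in> apg_typed_edges A c r"
    and "({x', y'}, C, {u, v}) \<in> apg_typed_edges A c r"
  shows "apg_zz A c r p \<gamma> \<beta> x y = apg_zz A c r p \<gamma> \<beta> x' y'
    \<and> (\<exists>f. bij_betw f (apg_ball A c r p x y) (apg_ball A c r p x' y')
           \<and> f ` {x, y} = {x', y'}
           \<and> (\<forall>e C'. e \<subseteq> apg_ball A c r p x y \<longrightarrow>
                 ((e, C') \<in> apg_induced A c r (apg_ball A c r p x y)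
                  \<longleftrightarrow> (f ` e, C') \<in> apg_induced A c r (apg_ball A c r p x' y'))))"
proof -
  note no_loops = atoms_ok_no_loops[OF assms(1)]
  obtain f1 where f1: "apg_iso A c r u f1" and f1_xy: "f1 ` {x, y} = {[], [(C, v)]}"
    using apg_typed_edge_to_root[OF no_loops assms(8,7)] by blast
  obtain f2 where f2: "apg_iso A c r u f2" and f2_xy: "f2 ` {x', y'} = {[], [(C, v)]}"
    using apg_typed_edge_to_root[OF no_loops assms(9,7)] by blast
  define F where "F = inv_into {t. apg_vert A c r t} f2 \<circ> f1"
  have F: "apg_iso A c r r F" unfolding F_def using apg_iso_comp[OF f1 apg_iso_inv[OF f2]] .
  have "apg_vert A c r x" "apg_vert A c r y" "apg_vert A c r x'" "apg_vert A c r y'"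
    using apg_cat_edge_verts apg_typed_edge_cat assms(8,9) by blast+
  moreover have "inj_on f2 {t. apg_vert A c r t}" using f2 unfolding apg_iso_def bij_betw_def by blast
  ultimately have F_xy: "F ` {x, y} = {x', y'}"
    unfolding F_def image_comp[symmetric] f1_xy f2_xy[symmetric] by (simp add: inv_into_image_cancel)
  show ?thesis
    using apg_iso_edge_neighbourhood[OF F \<open>apg_vert A c r x\<close> \<open>apg_vert A c r y\<close> F_xy] F_xy by blast
qed

end
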